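(* Let $n\ge2$, $t\in(0,1)$ and $A\in\mathcal K_0^n$, and set $\kappa_t(A)=\overline{\mathrm{conv}}\Big(\bigcup_{a\in A}\big[0,\tfrac{1}{1+t\|a\|}a\big]\cup t\mathbb B\Big)$. Then $\kappa_t(A)\subseteq \big(\psi_t(A^\circ)\big)^\circ$, where $\psi_t(K)=(K+t\mathbb B)\cap\frac{1-t}{t}\mathbb B$.
   Context: $\mathbb B$ is the closed Euclidean unit ball of $\mathbb R^n$, $[a,b]$ the segment between $a,b$, and $\overline{\mathrm{conv}}$ the closed convex hull. $\mathcal K_0^n$ is the family of closed convex subsets of $\mathbb R^n$ containing $0$. The polar set of $A\subseteq\mathbb R^n$ is $A^\circ=\{x\in\mathbb R^n:\sup_{a\in A}\langle a,x\rangle\le1\}$. *)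

theory Defs
  imports "HOL-Analysis.Analysis"
begin

definition polar :: "'a::real_inner set \<Rightarrow> 'a set" where
  "polar A = {x. \<forall>a\<in>A. inner a x \<le> 1}"

definition kappa :: "real \<Rightarrow> 'a::euclidean_space set \<Rightarrow> 'a set" where
  "kappa t A = closure (convex hull
      ((\<Union>a\<in>A. closed_segment 0 ((1 / (1 + t * norm a)) *\<^sub>R a)) \<union> cball 0 t))"

definition psi :: "real \<Rightarrow> 'a::euclidean_space set \<Rightarrow> 'a set" where
  "psi t K = {x + y | x y. x \<in> K \<and> y \<in> cball 0 t} \<inter> cball 0 ((1 - t) / t)"

end

theory Submission
  imports Defs
begin

text \<open>Polars are closed, convex, contain 0 and reverse inclusion. It is therefore enough to
  check the generators of \<open>\<kappa>\<^sub>t(A)\<close>. The ball \<open>t\<bbbB>\<close> is polar to \<open>(1/t)\<bbbB> \<supseteq> \<psi>\<^sub>t(A\<degree>)\<close>. For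
  \<open>a \<in> A\<close>, every \<open>x + y\<close> with \<open>x \<in> A\<degree>\<close> and \<open>\<parallel>y\<parallel> \<le> t\<close> satisfies \<open>\<langle>a, x + y\<rangle> \<le> 1 + t\<parallel>a\<parallel>\<close>,
  so \<open>a/(1 + t\<parallel>a\<parallel>)\<close> lies in the polar of \<open>A\<degree> + t\<bbbB> \<supseteq> \<psi>\<^sub>t(A\<degree>)\<close>, and with it the whole
  segment from 0.\<close>

lemma polar_eq_Inter: "polar A = (\<Inter>a\<in>A. {x. inner a x \<le> 1})"
  unfolding polar_def by auto

lemma closed_polar: "closed (polar A)"
  unfolding polar_eq_Inter by (intro closed_INT ballI closed_Collect_le continuous_intros)

lemma convex_polar: "convex (polar A)"
  unfolding polar_eq_Inter by (intro convex_INT convex_halfspace_le)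

lemma zero_in_polar: "0 \<in> polar A"
  unfolding polar_def by simp

lemma polar_antimono: "A \<subseteq> B \<Longrightarrow> polar B \<subseteq> polar A"
  unfolding polar_def by auto

lemma closed_segment_zero_subset_polar: "b \<in> polar A \<Longrightarrow> closed_segment 0 b \<subseteq> polar A"
  using closed_segment_subset convex_polar zero_in_polar by blast

lemma closure_convex_hull_subset_polar:
  assumes "S \<subseteq> polar A"
  shows "closure (convex hull S) \<subseteq> polar A"
  by (intro closure_minimal hull_minimal assms convex_polar closed_polar)

lemma cball_subset_polar_cball:
  assumes "0 < t"
  shows "cball 0 t \<subseteq> polar (cball 0 (1 / t))"
proof
  fix w :: 'a assume w: "w \<in> cball 0 t"
  have "inner z w \<le> 1" if "z \<in> cball 0 (1 / t)" for z
  proof -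
    have "inner z w \<le> norm z * norm w" by (rule norm_cauchy_schwarz)
    also have "\<dots> \<le> (1 / t) * t"
      using that w assms by (intro mult_mono) auto
    finally show ?thesis using assms by simp
  qed
  then show "w \<in> polar (cball 0 (1 / t))" unfolding polar_def by blast
qed

lemma shrunk_point_in_polar_of_sum_cball:
  assumes "a \<in> A" and "0 \<le> t"
  shows "(1 / (1 + t * norm a)) *\<^sub>R a \<in> polar {x + y | x y. x \<in> polar A \<and> y \<in> cball 0 t}"
proof -
  have pos: "0 < 1 + t * norm a" using assms(2) by (simp add: add_pos_nonneg)
  have "inner ((1 / (1 + t * norm a)) *\<^sub>R a) (x + y) \<le> 1"
    if x: "x \<in> polar A" and y: "norm y \<le> t" for x y
  proof -
    have "inner a x \<le> 1" using x assms(1) unfolding polar_def by blast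
    moreover have "inner a y \<le> norm a * t"
      using norm_cauchy_schwarz[of a y] mult_left_mono[OF y norm_ge_zero, of a] by linarith
    ultimately have "inner a (x + y) \<le> 1 + t * norm a"
      by (simp add: inner_add_right algebra_simps)
    with pos show ?thesis by simp
  qed
  then show ?thesis unfolding polar_def by (auto simp: inner_commute)
qed

lemma psi_subset_cball: "psi t K \<subseteq> cball 0 ((1 - t) / t)"
  unfolding psi_def by blast

lemma psi_subset_sum_cball: "psi t K \<subseteq> {x + y | x y. x \<in> K \<and> y \<in> cball 0 t}"
  unfolding psi_def by blast

theorem lemma4p2:
  fixes A :: "'a::euclidean_space set" and t :: real
  assumes "DIM('a) \<ge> 2"
    and "0 < t" and "t < 1"
    and "closed A" and "convex A" and "0 \<in> A"
  shows "kappa t A \<subseteq> polar (psi t (polar A))"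
proof -
  have segments: "closed_segment 0 ((1 / (1 + t * norm a)) *\<^sub>R a) \<subseteq> polar (psi t (polar A))"
    if "a \<in> A" for a
    using shrunk_point_in_polar_of_sum_cball[OF that, of t] \<open>0 < t\<close>
      polar_antimono[OF psi_subset_sum_cball]
    by (intro closed_segment_zero_subset_polar) auto
  have "cball 0 ((1 - t) / t) \<subseteq> cball 0 (1 / t)"
    using \<open>0 < t\<close> \<open>t < 1\<close> by (intro subset_cball) (simp add: divide_right_mono)
  then have ball: "cball 0 t \<subseteq> polar (psi t (polar A))"
    using cball_subset_polar_cball[OF \<open>0 < t\<close>] polar_antimono psi_subset_cball by blast
  show ?thesis
    unfolding kappa_def using segments ball by (intro closure_convex_hull_subset_polar) blast
qed

end
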